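(* Let $T_1,T_2,\dots$ be independent exponential random variables with parameters $\lambda_i=4\sqrt{i+1}$, and for constants $c_1,c_2>0$ and $k\ge1$ let $G=\big\{|\{1\le i\le k: T_i\ge c_2/\sqrt{i}\}|>c_1k\big\}$. For any $\tilde c\in(0,\infty)$ there exist $c_1,c_2>0$ such that for all sufficiently large $k$, $\mathbf P(G^c)\le\exp(-\tilde c k)$. *)

theory Defs
  imports "HOL-Probability.Probability"
begin

end

theory Submission
  imports Defs
begin

text \<open>
  Call index \<open>i\<close> small if \<open>T\<^sub>i < c\<^sub>2 / \<surd>i\<close>. Since \<open>4\<surd>(i+1) \<le> 8\<surd>i\<close>, the exponential tail
  gives \<open>P(i small) \<le> 8 c\<^sub>2 =: q\<close> uniformly in \<open>i\<close>. If at most half of the indices in \<open>{1..k}\<close>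
  are not small, then some set of \<open>\<lceil>k/2\<rceil>\<close> indices consists of small ones only; by
  independence and a union bound over the at most \<open>2\<^sup>k\<close> such sets this has probability at most
  \<open>2\<^sup>k q\<^bsup>k/2\<^esup> = (2\<surd>q)\<^sup>k\<close>, which is \<open>exp (-c k)\<close> for \<open>q = exp (-2c) / 4\<close>.
\<close>

lemma sqrt_add_one_le_two_sqrt:
  fixes x :: real
  assumes "1 \<le> x"
  shows "sqrt (x + 1) \<le> 2 * sqrt x"
proof -
  have "sqrt (x + 1) \<le> sqrt (4 * x)" using assms by simp
  also have "\<dots> = 2 * sqrt x" by (simp add: real_sqrt_mult)
  finally show ?thesis .
qed

lemma card_filter_not_ge_half:
  assumes "finite I" and "2 * card {i \<in> I. P i} \<le> card I"
  shows "(card I + 1) div 2 \<le> card {i \<in> I. \<not> P i}"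
proof -
  have "{i \<in> I. \<not> P i} = I - {i \<in> I. P i}"
    by blast
  then have "card {i \<in> I. \<not> P i} = card I - card {i \<in> I. P i}"
    using \<open>finite I\<close> by (simp add: card_Diff_subset)
  with assms(2) show ?thesis
    by presburger
qed

lemma Collect_card_at_least_eq_UN:
  assumes "finite I"
  shows "{\<omega> \<in> \<Omega>. m \<le> card {i \<in> I. \<omega> \<in> A i}}
    = (\<Union>S\<in>{S. S \<subseteq> I \<and> card S = m}. {\<omega> \<in> \<Omega>. \<forall>i\<in>S. \<omega> \<in> A i})"
proof (intro equalityI subsetI)
  fix \<omega> assume "\<omega> \<in> {\<omega> \<in> \<Omega>. m \<le> card {i \<in> I. \<omega> \<in> A i}}"
  then obtain S where "S \<subseteq> {i \<in> I. \<omega> \<in> A i}" "card S = m" "\<omega> \<in> \<Omega>"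
    by (auto elim: obtain_subset_with_card_n)
  then show "\<omega> \<in> (\<Union>S\<in>{S. S \<subseteq> I \<and> card S = m}. {\<omega> \<in> \<Omega>. \<forall>i\<in>S. \<omega> \<in> A i})"
    by blast
next
  fix \<omega> assume "\<omega> \<in> (\<Union>S\<in>{S. S \<subseteq> I \<and> card S = m}. {\<omega> \<in> \<Omega>. \<forall>i\<in>S. \<omega> \<in> A i})"
  then obtain S where "S \<subseteq> {i \<in> I. \<omega> \<in> A i}" "card S = m" "\<omega> \<in> \<Omega>"
    by blast
  moreover have "card S \<le> card {i \<in> I. \<omega> \<in> A i}"
    using calculation(1) assms by (intro card_mono) auto
  ultimately show "\<omega> \<in> {\<omega> \<in> \<Omega>. m \<le> card {i \<in> I. \<omega> \<in> A i}}"
    by simp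
qed

context prob_space
begin

lemma exponential_distributed_prob_less_le:
  assumes "distributed M lborel X (exponential_density l)" and "0 < l" and "0 \<le> a"
  shows "prob {x \<in> space M. X x < a} \<le> a * l"
proof -
  have "prob {x \<in> space M. X x < a} \<le> prob {x \<in> space M. X x \<le> a}"
    using distributed_measurable[OF assms(1)] by (intro finite_measure_mono) auto
  also have "\<dots> = 1 - exp (- a * l)"
    using exponential_distributedD_le[OF assms(1,3,2)] by simp
  also have "\<dots> \<le> a * l"
    using exp_ge_add_one_self[of "- a * l"] by simp
  finally show ?thesis .
qed

lemma exponential_sqrt_rate_prob_less_le:
  assumes "distributed M lborel X (exponential_density (4 * sqrt (real i + 1)))"
    and "1 \<le> i" and "0 \<le> c"
  shows "prob {x \<in> space M. X x < c / sqrt (real i)} \<le> 8 * c"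
proof -
  have "prob {x \<in> space M. X x < c / sqrt (real i)} \<le> c / sqrt (real i) * (4 * sqrt (real i + 1))"
    using assms by (intro exponential_distributed_prob_less_le) auto
  also have "\<dots> \<le> c / sqrt (real i) * (4 * (2 * sqrt (real i)))"
    using sqrt_add_one_le_two_sqrt[of "real i"] assms(2,3) by (intro mult_left_mono) auto
  also have "\<dots> = 8 * c"
    using assms(2) by simp
  finally show ?thesis .
qed

lemma indep_events_prob_all_le:
  assumes indep: "indep_events A I" and "J \<subseteq> I" and "finite J"
    and bound: "\<And>i. i \<in> J \<Longrightarrow> prob (A i) \<le> q"
  shows "prob {\<omega> \<in> space M. \<forall>i\<in>J. \<omega> \<in> A i} \<le> q ^ card J"
proof (cases "J = {}")
  case True
  then show ?thesis by simp
next
  case False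
  have events: "A ` I \<subseteq> events"
    using indep by (simp add: indep_events_def)
  then have "{\<omega> \<in> space M. \<forall>i\<in>J. \<omega> \<in> A i} = (\<Inter>i\<in>J. A i)"
    using False \<open>J \<subseteq> I\<close> sets.sets_into_space by blast
  then have "prob {\<omega> \<in> space M. \<forall>i\<in>J. \<omega> \<in> A i} = (\<Prod>i\<in>J. prob (A i))"
    using indep False assms(2,3) by (simp add: indep_events_def)
  also have "\<dots> \<le> (\<Prod>i\<in>J. q)"
    using bound by (intro prod_mono) auto
  finally show ?thesis by simp
qed

lemma sets_Collect_card_at_least:
  assumes "A ` I \<subseteq> events" and "finite I"
  shows "{\<omega> \<in> space M. m \<le> card {i \<in> I. \<omega> \<in> A i}} \<in> events"
  unfolding Collect_card_at_least_eq_UN[OF \<open>finite I\<close>] using assms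
  by (intro sets.finite_UN sets.sets_Collect_finite_All) (auto intro: finite_subset)

lemma indep_events_prob_at_least_le:
  assumes indep: "indep_events A I" and "finite I"
    and bound: "\<And>i. i \<in> I \<Longrightarrow> prob (A i) \<le> q"
  shows "prob {\<omega> \<in> space M. m \<le> card {i \<in> I. \<omega> \<in> A i}} \<le> real (card I choose m) * q ^ m"
proof -
  define \<S> where "\<S> = {S. S \<subseteq> I \<and> card S = m}"
  define all_in where "all_in S = {\<omega> \<in> space M. \<forall>i\<in>S. \<omega> \<in> A i}" for S
  have "finite \<S>"
    using \<open>finite I\<close> unfolding \<S>_def by simp
  have "A ` I \<subseteq> events"
    using indep by (simp add: indep_events_def)
  then have events: "all_in S \<in> events" if "S \<in> \<S>" for S
    using that \<open>finite I\<close> unfolding \<S>_def all_in_def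
    by (intro sets.sets_Collect_finite_All) (auto intro: finite_subset)
  have "prob {\<omega> \<in> space M. m \<le> card {i \<in> I. \<omega> \<in> A i}} = prob (\<Union>S\<in>\<S>. all_in S)"
    unfolding Collect_card_at_least_eq_UN[OF \<open>finite I\<close>] \<S>_def all_in_def ..
  also have "\<dots> \<le> (\<Sum>S\<in>\<S>. prob (all_in S))"
    using events \<open>finite \<S>\<close> by (intro measure_UNION_le) auto
  also have "\<dots> \<le> (\<Sum>S\<in>\<S>. q ^ m)"
    using indep_events_prob_all_le[OF indep] bound \<open>finite I\<close>
    unfolding \<S>_def all_in_def by (intro sum_mono) (auto intro: finite_subset)
  also have "\<dots> = real (card I choose m) * q ^ m"
    using n_subsets[OF \<open>finite I\<close>] unfolding \<S>_def by simp
  finally show ?thesis .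
qed

end

lemma prob_few_large_exponentials_le:
  fixes M :: "'a measure" and T :: "nat \<Rightarrow> 'a \<Rightarrow> real"
  assumes "prob_space M"
    and indep: "prob_space.indep_vars M (\<lambda>_. borel) T {1..}"
    and distr: "\<And>i. i \<ge> 1 \<Longrightarrow>
           distributed M lborel (T i) (exponential_density (4 * sqrt (real i + 1)))"
    and "0 < q" and "q \<le> 1"
  shows "measure M {\<omega> \<in> space M.
           \<not> (real (card {i \<in> {1..k}. T i \<omega> \<ge> q / 8 / sqrt (real i)}) > 1/2 * real k)}
         \<le> (2 * sqrt q) ^ k"
proof -
  interpret prob_space M by fact
  define small where "small i = {\<omega> \<in> space M. T i \<omega> < q / 8 / sqrt (real i)}" for i
  define m where "m = (k + 1) div 2"
  have indep_small: "indep_events small {1..k}"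
    unfolding small_def using indep_vars_subset[OF indep]
    by (intro indep_eventsI_indep_vars[where N="\<lambda>_. borel"]) auto
  have prob_small: "prob (small i) \<le> q" if "i \<in> {1..k}" for i
    using exponential_sqrt_rate_prob_less_le[OF distr, of i "q / 8"] that \<open>0 < q\<close>
    unfolding small_def by simp
  have "{\<omega> \<in> space M. \<not> (real (card {i \<in> {1..k}. T i \<omega> \<ge> q / 8 / sqrt (real i)}) > 1/2 * real k)}
      \<subseteq> {\<omega> \<in> space M. m \<le> card {i \<in> {1..k}. \<omega> \<in> small i}}"
  proof safe
    fix \<omega> assume "\<omega> \<in> space M"
      and few: "\<not> real (card {i \<in> {1..k}. T i \<omega> \<ge> q / 8 / sqrt (real i)}) > 1/2 * real k"
    have "{i \<in> {1..k}. \<omega> \<in> small i} = {i \<in> {1..k}. \<not> T i \<omega> \<ge> q / 8 / sqrt (real i)}"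
      using \<open>\<omega> \<in> space M\<close> by (auto simp: small_def)
    moreover have "2 * card {i \<in> {1..k}. T i \<omega> \<ge> q / 8 / sqrt (real i)} \<le> card {1..k}"
      using few by simp
    ultimately show "m \<le> card {i \<in> {1..k}. \<omega> \<in> small i}"
      using card_filter_not_ge_half[of "{1..k}"] unfolding m_def by simp
  qed
  then have "prob {\<omega> \<in> space M. \<not> (real (card {i \<in> {1..k}. T i \<omega> \<ge> q / 8 / sqrt (real i)}) > 1/2 * real k)}
      \<le> prob {\<omega> \<in> space M. m \<le> card {i \<in> {1..k}. \<omega> \<in> small i}}"
    using indep_small by (intro finite_measure_mono sets_Collect_card_at_least)
      (auto simp: indep_events_def)
  also have "\<dots> \<le> real (k choose m) * q ^ m"
    using indep_events_prob_at_least_le[OF indep_small _ prob_small] by simp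
  also have "\<dots> \<le> 2 ^ k * sqrt q ^ k"
  proof (intro mult_mono)
    have "real (k choose m) \<le> real (2 ^ k)"
      using binomial_le_pow2 by (rule of_nat_mono)
    then show "real (k choose m) \<le> 2 ^ k"
      by simp
    have "q ^ m = sqrt q ^ (2 * m)"
      using \<open>0 < q\<close> by (simp add: power_mult)
    also have "\<dots> \<le> sqrt q ^ k"
      using \<open>0 < q\<close> \<open>q \<le> 1\<close> by (intro power_decreasing) (auto simp: m_def)
    finally show "q ^ m \<le> sqrt q ^ k" .
  qed (use \<open>0 < q\<close> in auto)
  also have "\<dots> = (2 * sqrt q) ^ k"
    by (simp add: power_mult_distrib)
  finally show ?thesis .
qed

theorem mainTheorem6:
  fixes M :: "'a measure" and T :: "nat \<Rightarrow> 'a \<Rightarrow> real"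
  assumes "prob_space M"
    and "prob_space.indep_vars M (\<lambda>_. borel) T {1..}"
    and "\<And>i. i \<ge> 1 \<Longrightarrow>
           distributed M lborel (T i) (exponential_density (4 * sqrt (real i + 1)))"
  shows "\<forall>ct > 0. \<exists>c1 c2. c1 > 0 \<and> c2 > 0 \<and>
           (\<forall>\<^sub>F k in sequentially.
              measure M {\<omega> \<in> space M.
                 \<not> (real (card {i \<in> {1..k}. T i \<omega> \<ge> c2 / sqrt (real i)}) > c1 * real k)}
              \<le> exp (- ct * real k))"
proof (intro allI impI)
  fix ct :: real assume "ct > 0"
  define q where "q = exp (-2 * ct) / 4"
  have "0 < q"
    unfolding q_def by simp
  have "exp (-2 * ct) \<le> 1"
    using \<open>ct > 0\<close> by simp
  then have "q \<le> 1"
    unfolding q_def by linarith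
  have "q = (exp (- ct) / 2)\<^sup>2"
    unfolding q_def by (simp add: power2_eq_square flip: exp_add)
  then have "2 * sqrt q = exp (- ct)"
    by simp
  then have exp_eq: "(2 * sqrt q) ^ k = exp (- ct * real k)" for k
    using exp_of_nat_mult[of k "- ct"] by (simp add: mult_ac)
  have "measure M {\<omega> \<in> space M.
      \<not> (real (card {i \<in> {1..k}. T i \<omega> \<ge> q / 8 / sqrt (real i)}) > 1/2 * real k)}
      \<le> exp (- ct * real k)" for k
    using prob_few_large_exponentials_le[OF assms \<open>0 < q\<close> \<open>q \<le> 1\<close>]
    by (simp only: exp_eq)
  then show "\<exists>c1 c2. c1 > 0 \<and> c2 > 0 \<and>
           (\<forall>\<^sub>F k in sequentially.
              measure M {\<omega> \<in> space M.
                 \<not> (real (card {i \<in> {1..k}. T i \<omega> \<ge> c2 / sqrt (real i)}) > c1 * real k)}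
              \<le> exp (- ct * real k))"
    using \<open>0 < q\<close> by (intro exI[of _ "1/2"] exI[of _ "q / 8"]) (auto intro: always_eventually)
qed

end
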